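(* For any program $\Omega$ with weight constraints, the map $Z\mapsto Z\setminus Q_\Omega$ is a one-to-one correspondence between the answer sets of the nonnested translation $[\Omega]^{nn}$ and the answer sets of $\Omega$, where $Q_\Omega$ is the set of all new atoms (negation atoms and weight atoms) occurring in $[\Omega]^{nn}$.
   Context: Programs with nested expressions. A literal is a propositional atom $a$ or its classical negation $\neg a$; a set of literals is consistent if it contains no pair $a,\neg a$. Elementary formulas are literals, $\bot$ and $\top$. Formulas are built from elementary formulas using the unary connective $\mathit{not}$ (negation as failure) and the binary connectives "," (conjunction) and ";" (disjunction). A rule with nested expressions has the form $\mathit{Head}\leftarrow \mathit{Body}$ where $\mathit{Head},\mathit{Body}$ are formulas (a formula $F$ alone stands for $F\leftarrow\top$); a program with nested expressions is a set of such rules. For a consistent set $Z$ of literals: $Z\models l$ iff $l\in Z$ for a literal $l$; $Z\models\top$; $Z\not\models\bot$; $Z\models(F,G)$ iff $Z\models F$ and $Z\models G$; $Z\models(F;G)$ iff $Z\models F$ or $Z\models G$; $Z\models \mathit{not}\,F$ iff $Z\not\models F$. $Z$ satisfies a program if for every rule, $Z\models\mathit{Body}$ implies $Z\models\mathit{Head}$. The reduct $F^Z$: $F^Z=F$ for elementary $F$; $(F,G)^Z=F^Z,G^Z$; $(F;G)^Z=F^Z;G^Z$; $(\mathit{not}\,F)^Z=\bot$ if $Z\models F$ and $\top$ otherwise. $\Pi^Z$ is the set of rules $\mathit{Head}^Z\leftarrow\mathit{Body}^Z$ for the rules of $\Pi$. A consistent set $Z$ is an answer set of a program without $\mathit{not}$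 if it is a minimal (under inclusion) consistent set of literals satisfying it; $Z$ is an answer set of an arbitrary program $\Pi$ if $Z$ is an answer set of $\Pi^Z$. A nonnested rule is one whose head is a literal or $\bot$ and whose body is a conjunction of literals, each possibly prefixed with $\mathit{not}$. Programs with weight constraints. A rule element is a literal $l$ (positive) or $\mathit{not}\ l$ (negative); $Z\models c$ for a rule element is as for formulas. A weight constraint is $L\le\{c_1=w_1,\dots,c_m=w_m\}\le U$ where $L,U$ are real numbers or $\pm\infty$, $c_1,\dots,c_m$ ($m\ge0$) are rule elements and $w_1,\dots,w_m$ are nonnegative reals. A rule with weight constraints is $C_0\leftarrow C_1,\dots,C_n$ ($n\ge0$) with weight constraints $C_i$; the rule elements of $C_0$ are its head elements. A program with weight constraints is a set of such rules. A literal $c$ is identified with the constraint $1\le\{c=1\}$. A consistent set $Z$ of literals satisfies the weight constraint above if $L\le\sum_{j:Z\models c_j}w_j\le U$, and satisfies a program $\Omega$ if for every rule, whenever $Z$ satisfies $C_1,\dots,C_n$ it satisfies $C_0$. The reduct $(L\le S)^Z$ is $L^Z\le S'$ where $S'$ is obtained from $S$ by dropping all pairs $c=w$ with $c$ negative, and $L^Z$ is $L$ minus the sum of the weights $w$ of the pairs $c=w$ in $S$ with $c$ negative and $Z\models c$. The reduct of a rule $L_0\le S_0\le U_0\leftarrow L_1\le S_1\le U_1,\dots,L_n\le S_n\le U_n$ w.r.t. $Z$ is, if $Z\models S_i\le U_i$ for all $1\le i\le n$, the set of rules $l\leftarrow (L_1\le S_1)^Z,\dots,(L_n\le S_n)^Z$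 for all positive head elements $l$ with $Z\models l$; otherwise it is empty. $\Omega^Z$ is the union of the reducts of the rules of $\Omega$; it has a unique minimal satisfying set of literals, $\mathit{cl}(\Omega^Z)$. $Z$ is an answer set of $\Omega$ if $Z\models\Omega$ and $\mathit{cl}(\Omega^Z)=Z$. Nonnested translation. For each literal $l$ there is a new atom $q_{\mathit{not}\,l}$ (negation atom), and for each real $w$ (or $\pm\infty$) and each expression $S=\{c_1=w_1,\dots,c_m=w_m\}$ there are new atoms $q_{w\le S}$ and $q_{w<S}$ (weight atoms); all new atoms are distinct and do not occur in $\Omega$. For $m>0$, $S'$ denotes $\{c_1=w_1,\dots,c_{m-1}=w_{m-1}\}$. A nonnested program $\Pi$ is closed if: for each atom $q_{w\le S}$ occurring in $\Pi$, $\Pi$ contains the rule $q_{w\le S}$ (i.e. $q_{w\le S}\leftarrow\top$) if $w\le0$, and the rules $q_{w\le S}\leftarrow q_{w\le S'}$ and $q_{w\le S}\leftarrow c_m,q_{w-w_m\le S'}$ if $0<w\le w_1+\dots+w_m$; and for each atom $q_{w<S}$ occurring in $\Pi$, $\Pi$ contains the rule $q_{w<S}$ if $w<0$, and the rules $q_{w<S}\leftarrow q_{w<S'}$ and $q_{w<S}\leftarrow c_m,q_{w-w_m<S'}$ if $0\le w<w_1+\dots+w_m$. For a weight constraint, $[L\le S\le U]^{nn}$ is the conjunction $q_{L\le S},\mathit{not}\,q_{U<S}$. $[\Omega]^{nn}$ is the smallest closed program containing, for every rule $L_0\le S_0\le U_0\leftarrow C_1,\dots,C_n$ of $\Omega$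 and each of its positive head elements $l$, the rules $q_{\mathit{not}\,l}\leftarrow\mathit{not}\,l$ and $l\leftarrow\mathit{not}\,q_{\mathit{not}\,l},[C_1]^{nn},\dots,[C_n]^{nn}$, together with the rules $\bot\leftarrow\mathit{not}\,q_{L_0\le S_0},[C_1]^{nn},\dots,[C_n]^{nn}$ and $\bot\leftarrow q_{U_0<S_0},[C_1]^{nn},\dots,[C_n]^{nn}$. *)

theory Defs
  imports Complex_Main "HOL-Library.Extended_Real"
begin

datatype 'a lit = Pos 'a | Neg 'a   \<comment> \<open>atom a, classical negation \<not>a\<close>

definition consistent :: "'a lit set \<Rightarrow> bool" where
  "consistent Z \<longleftrightarrow> (\<forall>a. \<not> (Pos a \<in> Z \<and> Neg a \<in> Z))"

fun lit_atom :: "'a lit \<Rightarrow> 'a" where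
  "lit_atom (Pos a) = a" | "lit_atom (Neg a) = a"

datatype 'a form = FLit "'a lit" | FBot | FTop | FNot "'a form"
  | FAnd "'a form" "'a form" | FOr "'a form" "'a form"

type_synonym 'a nrule = "'a form \<times> 'a form"   \<comment> \<open>(Head, Body)\<close>

fun fsat :: "'a lit set \<Rightarrow> 'a form \<Rightarrow> bool" where
  "fsat Z (FLit l) = (l \<in> Z)"
| "fsat Z FBot = False"
| "fsat Z FTop = True"
| "fsat Z (FNot F) = (\<not> fsat Z F)"
| "fsat Z (FAnd F G) = (fsat Z F \<and> fsat Z G)"
| "fsat Z (FOr F G) = (fsat Z F \<or> fsat Z G)"

definition psat :: "'a lit set \<Rightarrow> 'a nrule set \<Rightarrow> bool" where
  "psat Z \<Pi> \<longleftrightarrow> (\<forall>(h, b) \<in> \<Pi>. fsat Z b \<longrightarrow> fsat Z h)"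

fun freduct :: "'a lit set \<Rightarrow> 'a form \<Rightarrow> 'a form" where
  "freduct Z (FLit l) = FLit l"
| "freduct Z FBot = FBot"
| "freduct Z FTop = FTop"
| "freduct Z (FNot F) = (if fsat Z F then FBot else FTop)"
| "freduct Z (FAnd F G) = FAnd (freduct Z F) (freduct Z G)"
| "freduct Z (FOr F G) = FOr (freduct Z F) (freduct Z G)"

definition preduct :: "'a lit set \<Rightarrow> 'a nrule set \<Rightarrow> 'a nrule set" where
  "preduct Z \<Pi> = (\<lambda>(h, b). (freduct Z h, freduct Z b)) ` \<Pi>"

definition min_answer_set :: "'a nrule set \<Rightarrow> 'a lit set \<Rightarrow> bool" where
  "min_answer_set \<Pi> Z \<longleftrightarrow> consistent Z \<and> psat Z \<Pi> \<and>
     (\<forall>Y. consistent Y \<and> Y \<subseteq> Z \<and> psat Y \<Pi> \<longrightarrow> Y = Z)"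

definition nested_answer_set :: "'a nrule set \<Rightarrow> 'a lit set \<Rightarrow> bool" where
  "nested_answer_set \<Pi> Z \<longleftrightarrow> min_answer_set (preduct Z \<Pi>) Z"

fun form_atoms :: "'a form \<Rightarrow> 'a set" where
  "form_atoms (FLit l) = {lit_atom l}"
| "form_atoms FBot = {}"
| "form_atoms FTop = {}"
| "form_atoms (FNot F) = form_atoms F"
| "form_atoms (FAnd F G) = form_atoms F \<union> form_atoms G"
| "form_atoms (FOr F G) = form_atoms F \<union> form_atoms G"

definition prog_atoms :: "'a nrule set \<Rightarrow> 'a set" where
  "prog_atoms \<Pi> = (\<Union>(h, b) \<in> \<Pi>. form_atoms h \<union> form_atoms b)"

fun conj_list :: "'a form list \<Rightarrow> 'a form" where
  "conj_list [] = FTop"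
| "conj_list (F # Fs) = FAnd F (conj_list Fs)"

datatype 'a relem = PosE "'a lit" | NegE "'a lit"   \<comment> \<open>l  /  not l\<close>

text \<open>A weight constraint L \<le> {c1=w1,...,cm=wm} \<le> U; the expression S is a list.\<close>
type_synonym 'a wexpr = "('a relem \<times> real) list"
type_synonym 'a wc = "ereal \<times> 'a wexpr \<times> ereal"
type_synonym 'a wrule = "'a wc \<times> 'a wc list"   \<comment> \<open>C0 \<leftarrow> C1,...,Cn\<close>

fun relem_sat :: "'a lit set \<Rightarrow> 'a relem \<Rightarrow> bool" where
  "relem_sat Z (PosE l) = (l \<in> Z)"
| "relem_sat Z (NegE l) = (l \<notin> Z)"

definition wsum :: "'a lit set \<Rightarrow> 'a wexpr \<Rightarrow> real" where
  "wsum Z S = sum_list (map snd (filter (\<lambda>(c, w). relem_sat Z c) S))"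

fun wc_sat :: "'a lit set \<Rightarrow> 'a wc \<Rightarrow> bool" where
  "wc_sat Z (L, S, U) = (L \<le> ereal (wsum Z S) \<and> ereal (wsum Z S) \<le> U)"

definition wprog_sat :: "'a lit set \<Rightarrow> 'a wrule set \<Rightarrow> bool" where
  "wprog_sat Z \<Omega> \<longleftrightarrow> (\<forall>(C0, Cs) \<in> \<Omega>. (\<forall>C \<in> set Cs. wc_sat Z C) \<longrightarrow> wc_sat Z C0)"

fun is_negE :: "'a relem \<Rightarrow> bool" where
  "is_negE (PosE l) = False" | "is_negE (NegE l) = True"

text \<open>Reduct (L \<le> S)^Z = L^Z \<le> S' with S' consisting of positive pairs only
  (represented as a list of literal/weight pairs).\<close>
fun lower_reduct :: "'a lit set \<Rightarrow> 'a wc \<Rightarrow> ereal \<times> ('a lit \<times> real) list" where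
  "lower_reduct Z (L, S, U) =
     (L - ereal (sum_list (map snd (filter (\<lambda>(c, w). is_negE c \<and> relem_sat Z c) S))),
      [(l, w). (PosE l, w) \<leftarrow> S])"

type_synonym 'a drule = "'a lit \<times> (ereal \<times> ('a lit \<times> real) list) list"

definition wreduct :: "'a lit set \<Rightarrow> 'a wrule set \<Rightarrow> 'a drule set" where
  "wreduct Z \<Omega> = {(l, map (lower_reduct Z) Cs) | l C0 Cs.
      (C0, Cs) \<in> \<Omega> \<and> (\<forall>(L, S, U) \<in> set Cs. ereal (wsum Z S) \<le> U)
      \<and> PosE l \<in> fst ` set (fst (snd C0)) \<and> l \<in> Z}"

definition dsat :: "'a lit set \<Rightarrow> 'a drule set \<Rightarrow> bool" where
  "dsat X R \<longleftrightarrow> (\<forall>(l, Bs) \<in> R.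
      (\<forall>(L, S) \<in> set Bs. L \<le> ereal (sum_list (map snd (filter (\<lambda>(l', w). l' \<in> X) S))))
      \<longrightarrow> l \<in> X)"

definition cl :: "'a drule set \<Rightarrow> 'a lit set" where
  "cl R = \<Inter> {X. dsat X R}"

definition wc_answer_set :: "'a wrule set \<Rightarrow> 'a lit set \<Rightarrow> bool" where
  "wc_answer_set \<Omega> Z \<longleftrightarrow> consistent Z \<and> wprog_sat Z \<Omega> \<and> cl (wreduct Z \<Omega>) = Z"

text \<open>Atoms of the translation: original atoms plus distinct new atoms:
  negation atoms q_{not l} and weight atoms q_{w\<le>S}, q_{w<S}.\<close>
datatype 'a natom = Orig 'a | QNot "'a lit" | QLe ereal "'a wexpr" | QLt ereal "'a wexpr"

fun is_new :: "'a natom \<Rightarrow> bool" where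
  "is_new (Orig a) = False" | "is_new _ = True"

definition lift :: "'a lit \<Rightarrow> 'a natom lit" where
  "lift = map_lit Orig"

fun elem_form :: "'a relem \<Rightarrow> 'a natom form" where
  "elem_form (PosE l) = FLit (lift l)"
| "elem_form (NegE l) = FNot (FLit (lift l))"

definition qatom :: "'a natom \<Rightarrow> 'a natom form" where
  "qatom q = FLit (Pos q)"

definition wtotal :: "'a wexpr \<Rightarrow> ereal" where
  "wtotal S = ereal (sum_list (map snd S))"

definition closed :: "'a natom nrule set \<Rightarrow> bool" where
  "closed \<Pi> \<longleftrightarrow>
    (\<forall>w S. QLe w S \<in> prog_atoms \<Pi> \<longrightarrow>
       (w \<le> 0 \<longrightarrow> (qatom (QLe w S), FTop) \<in> \<Pi>) \<and>
       (0 < w \<and> w \<le> wtotal S \<longrightarrow>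
          (qatom (QLe w S), qatom (QLe w (butlast S))) \<in> \<Pi> \<and>
          (qatom (QLe w S), FAnd (elem_form (fst (last S)))
                                 (qatom (QLe (w - ereal (snd (last S))) (butlast S)))) \<in> \<Pi>)) \<and>
    (\<forall>w S. QLt w S \<in> prog_atoms \<Pi> \<longrightarrow>
       (w < 0 \<longrightarrow> (qatom (QLt w S), FTop) \<in> \<Pi>) \<and>
       (0 \<le> w \<and> w < wtotal S \<longrightarrow>
          (qatom (QLt w S), qatom (QLt w (butlast S))) \<in> \<Pi> \<and>
          (qatom (QLt w S), FAnd (elem_form (fst (last S)))
                                 (qatom (QLt (w - ereal (snd (last S))) (butlast S)))) \<in> \<Pi>))"

fun wc_nn :: "'a wc \<Rightarrow> 'a natom form" where
  "wc_nn (L, S, U) = FAnd (qatom (QLe L S)) (FNot (qatom (QLt U S)))"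

fun rule_base :: "'a wrule \<Rightarrow> 'a natom nrule set" where
  "rule_base ((L0, S0, U0), Cs) =
     {(qatom (QNot l), FNot (FLit (lift l))) | l. PosE l \<in> fst ` set S0} \<union>
     {(FLit (lift l), conj_list (FNot (qatom (QNot l)) # map wc_nn Cs)) | l. PosE l \<in> fst ` set S0} \<union>
     {(FBot, conj_list (FNot (qatom (QLe L0 S0)) # map wc_nn Cs)),
      (FBot, conj_list (qatom (QLt U0 S0) # map wc_nn Cs))}"

definition nn :: "'a wrule set \<Rightarrow> 'a natom nrule set" where
  "nn \<Omega> = \<Inter> {\<Pi>. closed \<Pi> \<and> (\<Union>r\<in>\<Omega>. rule_base r) \<subseteq> \<Pi>}"

definition new_atoms :: "'a wrule set \<Rightarrow> 'a natom set" where
  "new_atoms \<Omega> = {q \<in> prog_atoms (nn \<Omega>). is_new q}"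

end

theory Submission
  imports Defs
begin

text \<open>An answer set \<open>X\<close> of \<open>\<Omega>\<close> corresponds to \<open>X\<close> together with the new atoms that are
  true in \<open>X\<close>: the negation atom of \<open>l\<close> when \<open>l \<notin> X\<close>, and the weight atoms of \<open>w \<le> S\<close> and
  \<open>w < S\<close> when the weight of \<open>S\<close> in \<open>X\<close> is at least, resp. more than, \<open>w\<close>. The rules of
  \<open>[\<Omega>]\<^sup>n\<^sup>n\<close> for a weight atom compute its value by recursion on the last element of \<open>S\<close>,
  so every model \<open>Y\<close> of the reduct of \<open>[\<Omega>]\<^sup>n\<^sup>n\<close> with respect to \<open>Z\<close> contains the weight
  atoms that hold when the positive elements are evaluated in \<open>Y\<close> and the negative ones in \<open>Z\<close>;
  with nonnegative weights this evaluation is monotone in \<open>Y\<close>. Hence an answer set of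
  \<open>[\<Omega>]\<^sup>n\<^sup>n\<close> is determined by its original literals \<open>X\<close>, its constraints say that \<open>X\<close>
  satisfies \<open>\<Omega>\<close>, and models of its reduct restrict to models of \<open>\<Omega>\<^sup>X\<close> and conversely,
  so that minimality transfers in both directions.\<close>

subsection \<open>Weight sums and reducts of weight constraints\<close>

definition weight_sum :: "('b \<Rightarrow> bool) \<Rightarrow> ('b \<times> real) list \<Rightarrow> real" where
  "weight_sum P S = sum_list (map snd (filter (\<lambda>(c, w). P c) S))"

definition nonneg_weights :: "('b \<times> real) list \<Rightarrow> bool" where
  "nonneg_weights S \<longleftrightarrow> (\<forall>(c, w) \<in> set S. 0 \<le> w)"

lemma weight_sum_Nil [simp]: "weight_sum P [] = 0"
  by (simp add: weight_sum_def)

lemma weight_sum_Cons [simp]: "weight_sum P ((c, w) # S) = (if P c then w else 0) + weight_sum P S"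
  by (simp add: weight_sum_def)

lemma weight_sum_snoc [simp]: "weight_sum P (S @ [(c, w)]) = weight_sum P S + (if P c then w else 0)"
  by (simp add: weight_sum_def)

lemma nonneg_weights_Cons [simp]: "nonneg_weights ((c, w) # S) \<longleftrightarrow> 0 \<le> w \<and> nonneg_weights S"
  by (auto simp: nonneg_weights_def)

lemma nonneg_weights_snoc [simp]: "nonneg_weights (S @ [(c, w)]) \<longleftrightarrow> nonneg_weights S \<and> 0 \<le> w"
  by (auto simp: nonneg_weights_def)

lemma nonneg_weights_butlast: "nonneg_weights S \<Longrightarrow> nonneg_weights (butlast S)"
  unfolding nonneg_weights_def by (auto dest: in_set_butlastD)

lemma weight_sum_nonneg: "nonneg_weights S \<Longrightarrow> 0 \<le> weight_sum P S"
  by (induction S) auto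

lemma weight_sum_mono: "nonneg_weights S \<Longrightarrow> (\<And>c. P c \<Longrightarrow> Q c) \<Longrightarrow> weight_sum P S \<le> weight_sum Q S"
  by (induction S) (auto intro: add_mono)

lemma weight_sum_le_sum_list: "nonneg_weights S \<Longrightarrow> weight_sum P S \<le> sum_list (map snd S)"
  by (induction S) (auto intro: add_mono)

text \<open>\<open>wsum_red M X S\<close> is the weight of \<open>S\<close> at \<open>M\<close> in the reduct with respect to \<open>X\<close>,
  where the negative elements are already decided by \<open>X\<close>.\<close>

fun relem_sat_red :: "'a lit set \<Rightarrow> 'a lit set \<Rightarrow> 'a relem \<Rightarrow> bool" where
  "relem_sat_red M X (PosE l) = (l \<in> M)"
| "relem_sat_red M X (NegE l) = (l \<notin> X)"

definition wsum_red :: "'a lit set \<Rightarrow> 'a lit set \<Rightarrow> 'a wexpr \<Rightarrow> real" where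
  "wsum_red M X S = weight_sum (relem_sat_red M X) S"

lemma wsum_red_Nil [simp]: "wsum_red M X [] = 0"
  by (simp add: wsum_red_def)

lemma wsum_red_snoc [simp]:
  "wsum_red M X (S @ [(c, w)]) = wsum_red M X S + (if relem_sat_red M X c then w else 0)"
  by (simp add: wsum_red_def)

lemma wsum_red_self [simp]: "wsum_red X X S = wsum X S"
proof -
  have "relem_sat_red X X = relem_sat X"
  proof
    fix c show "relem_sat_red X X c = relem_sat X c" by (cases c) auto
  qed
  then show ?thesis by (simp add: wsum_red_def wsum_def weight_sum_def)
qed

lemma wsum_red_mono:
  assumes "nonneg_weights S" "M \<subseteq> M'"
  shows "wsum_red M X S \<le> wsum_red M' X S"
  unfolding wsum_red_def
proof (rule weight_sum_mono[OF assms(1)])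
  fix c show "relem_sat_red M X c \<Longrightarrow> relem_sat_red M' X c" using assms(2) by (cases c) auto
qed

lemma wsum_red_nonneg: "nonneg_weights S \<Longrightarrow> 0 \<le> wsum_red M X S"
  unfolding wsum_red_def by (rule weight_sum_nonneg)

lemma wsum_red_le_wtotal: "nonneg_weights S \<Longrightarrow> ereal (wsum_red M X S) \<le> wtotal S"
  unfolding wsum_red_def wtotal_def by (simp add: weight_sum_le_sum_list)

lemma lower_reduct_sat_iff:
  "fst (lower_reduct X (L, S, U)) \<le> ereal (weight_sum (\<lambda>l. l \<in> M) (snd (lower_reduct X (L, S, U))))
     \<longleftrightarrow> L \<le> ereal (wsum_red M X S)"
proof -
  have split: "wsum_red M X S = weight_sum (\<lambda>l. l \<in> M) [(l, w). (PosE l, w) \<leftarrow> S] +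
     sum_list (map snd (filter (\<lambda>(c, w). is_negE c \<and> relem_sat X c) S))"
  proof (induction S)
    case (Cons x S)
    then show ?case by (cases x; cases "fst x") (auto simp: wsum_red_def)
  qed simp
  show ?thesis unfolding split by (cases L) (auto simp: add.commute)
qed

lemma dsat_iff:
  "dsat M R \<longleftrightarrow> (\<forall>(l, Bs) \<in> R. (\<forall>(L, S) \<in> set Bs. L \<le> ereal (weight_sum (\<lambda>l'. l' \<in> M) S)) \<longrightarrow> l \<in> M)"
  unfolding dsat_def weight_sum_def by simp

lemma dsat_wreduct_iff:
  "dsat M (wreduct X \<Omega>) \<longleftrightarrow>
     (\<forall>(C0, Cs) \<in> \<Omega>. \<forall>l. PosE l \<in> fst ` set (fst (snd C0)) \<longrightarrow> l \<in> X \<longrightarrow>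
        (\<forall>(L, S, U) \<in> set Cs. ereal (wsum X S) \<le> U) \<longrightarrow>
        (\<forall>(L, S, U) \<in> set Cs. L \<le> ereal (wsum_red M X S)) \<longrightarrow> l \<in> M)"
proof -
  have body: "(\<forall>(L', S') \<in> set (map (lower_reduct X) Cs). L' \<le> ereal (weight_sum (\<lambda>l'. l' \<in> M) S'))
      \<longleftrightarrow> (\<forall>(L, S, U) \<in> set Cs. L \<le> ereal (wsum_red M X S))" for Cs
    using lower_reduct_sat_iff[of X _ _ _ M] by (auto simp: case_prod_unfold)
  have "dsat M (wreduct X \<Omega>) \<longleftrightarrow> (\<forall>l C0 Cs. (C0, Cs) \<in> \<Omega> \<longrightarrow> PosE l \<in> fst ` set (fst (snd C0)) \<longrightarrow>
      l \<in> X \<longrightarrow> (\<forall>(L, S, U) \<in> set Cs. ereal (wsum X S) \<le> U) \<longrightarrow>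
      (\<forall>(L', S') \<in> set (map (lower_reduct X) Cs). L' \<le> ereal (weight_sum (\<lambda>l'. l' \<in> M) S')) \<longrightarrow> l \<in> M)"
    unfolding dsat_iff wreduct_def by blast
  then show ?thesis unfolding body by blast
qed

lemma dsat_wreductD:
  assumes "dsat M (wreduct X \<Omega>)" "(C0, Cs) \<in> \<Omega>" "PosE l \<in> fst ` set (fst (snd C0))" "l \<in> X"
    "\<forall>(L, S, U) \<in> set Cs. ereal (wsum X S) \<le> U" "\<forall>(L, S, U) \<in> set Cs. L \<le> ereal (wsum_red M X S)"
  shows "l \<in> M"
  using assms unfolding dsat_wreduct_iff by fast

lemma dsat_wreductI:
  assumes "\<And>C0 Cs l. (C0, Cs) \<in> \<Omega> \<Longrightarrow> PosE l \<in> fst ` set (fst (snd C0)) \<Longrightarrow> l \<in> X \<Longrightarrow>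
    \<forall>(L, S, U) \<in> set Cs. ereal (wsum X S) \<le> U \<Longrightarrow>
    \<forall>(L, S, U) \<in> set Cs. L \<le> ereal (wsum_red M X S) \<Longrightarrow> l \<in> M"
  shows "dsat M (wreduct X \<Omega>)"
  unfolding dsat_wreduct_iff using assms by blast

lemma dsat_wreduct_self: "dsat X (wreduct X \<Omega>)"
  unfolding dsat_wreduct_iff by blast

lemma cl_least: "dsat M R \<Longrightarrow> cl R \<subseteq> M"
  unfolding cl_def by blast

definition nonneg_prog :: "'a wrule set \<Rightarrow> bool" where
  "nonneg_prog \<Omega> \<longleftrightarrow> (\<forall>(C0, Cs) \<in> \<Omega>. \<forall>(L, S, U) \<in> set (C0 # Cs). nonneg_weights S)"

lemma nonneg_progD:
  assumes "nonneg_prog \<Omega>" "(C0, Cs) \<in> \<Omega>" "(L, S, U) \<in> set (C0 # Cs)"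
  shows "nonneg_weights S"
proof -
  have "\<forall>(L, S, U) \<in> set (C0 # Cs). nonneg_weights S"
    using assms(1,2) unfolding nonneg_prog_def by blast
  then show ?thesis using assms(3) by fastforce
qed

text \<open>Nonnegative weights make the reduct monotone, so its least model is a model.\<close>

lemma dsat_cl_wreduct:
  assumes "nonneg_prog \<Omega>"
  shows "dsat (cl (wreduct X \<Omega>)) (wreduct X \<Omega>)"
proof (rule dsat_wreductI)
  let ?M = "cl (wreduct X \<Omega>)"
  fix C0 Cs l
  assume r: "(C0, Cs) \<in> \<Omega>" and l: "PosE l \<in> fst ` set (fst (snd C0))" "l \<in> X"
    and up: "\<forall>(L, S, U) \<in> set Cs. ereal (wsum X S) \<le> U"
    and low: "\<forall>(L, S, U) \<in> set Cs. L \<le> ereal (wsum_red ?M X S)"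
  show "l \<in> ?M" unfolding cl_def
  proof (rule InterI)
    fix M assume "M \<in> {M. dsat M (wreduct X \<Omega>)}"
    then have M: "dsat M (wreduct X \<Omega>)" by simp
    have "L \<le> ereal (wsum_red M X S)" if C: "(L, S, U) \<in> set Cs" for L S U
    proof -
      have "nonneg_weights S" using nonneg_progD[OF assms r, of L S U] C by simp
      then have "wsum_red ?M X S \<le> wsum_red M X S" using wsum_red_mono cl_least[OF M] by blast
      moreover have "L \<le> ereal (wsum_red ?M X S)" using low C by blast
      ultimately show ?thesis by (simp add: order_trans)
    qed
    then show "l \<in> M" using dsat_wreductD[OF M r l up] by blast
  qed
qed

lemma fsat_qatom [simp]: "fsat Y (qatom q) \<longleftrightarrow> Pos q \<in> Y"
  by (simp add: qatom_def)

lemma freduct_qatom [simp]: "freduct Z (qatom q) = qatom q"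
  by (simp add: qatom_def)

lemma form_atoms_qatom [simp]: "form_atoms (qatom q) = {q}"
  by (simp add: qatom_def)

lemma fsat_conj_list [simp]: "fsat Y (conj_list Fs) \<longleftrightarrow> (\<forall>F \<in> set Fs. fsat Y F)"
  by (induction Fs) auto

lemma freduct_conj_list [simp]: "freduct Z (conj_list Fs) = conj_list (map (freduct Z) Fs)"
  by (induction Fs) auto

lemma form_atoms_conj_list [simp]: "form_atoms (conj_list Fs) = (\<Union>F \<in> set Fs. form_atoms F)"
  by (induction Fs) auto

lemma fsat_freduct_mono: "fsat Y (freduct Z F) \<Longrightarrow> Y \<subseteq> Y' \<Longrightarrow> fsat Y' (freduct Z F)"
  by (induction F) auto

lemma psat_preduct_iff:
  "psat Y (preduct Z \<Pi>) \<longleftrightarrow> (\<forall>(h, b) \<in> \<Pi>. fsat Y (freduct Z b) \<longrightarrow> fsat Y (freduct Z h))"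
  unfolding psat_def preduct_def by auto

lemma psat_preductD:
  "psat Y (preduct Z \<Pi>) \<Longrightarrow> (h, b) \<in> \<Pi> \<Longrightarrow> fsat Y (freduct Z b) \<Longrightarrow> fsat Y (freduct Z h)"
  unfolding psat_preduct_iff by blast

lemma form_atoms_subset_prog_atoms:
  "(h, b) \<in> \<Pi> \<Longrightarrow> form_atoms h \<union> form_atoms b \<subseteq> prog_atoms \<Pi>"
  unfolding prog_atoms_def by blast

lemma prog_atoms_iff: "a \<in> prog_atoms \<Pi> \<longleftrightarrow> (\<exists>(h, b) \<in> \<Pi>. a \<in> form_atoms h \<union> form_atoms b)"
  unfolding prog_atoms_def by blast

lemma prog_atoms_mono: "\<Pi> \<subseteq> \<Pi>' \<Longrightarrow> prog_atoms \<Pi> \<subseteq> prog_atoms \<Pi>'"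
  unfolding prog_atoms_def by blast

lemma consistent_subset: "consistent Z \<Longrightarrow> Y \<subseteq> Z \<Longrightarrow> consistent Y"
  unfolding consistent_def by blast

lemma lift_simps [simp]: "lift (Pos a) = Pos (Orig a)" "lift (Neg a) = Neg (Orig a)"
  by (simp_all add: lift_def)

lemma inj_lift: "inj lift"
  unfolding lift_def by (intro lit.inj_map injI) simp

lemma lift_eq_Pos_iff [simp]: "lift l = Pos q \<longleftrightarrow> (\<exists>a. l = Pos a \<and> q = Orig a)"
  by (cases l) auto

lemma Pos_eq_lift_iff [simp]: "Pos q = lift l \<longleftrightarrow> (\<exists>a. l = Pos a \<and> q = Orig a)"
  by (cases l) auto

lemma Neg_eq_lift_iff [simp]: "Neg q = lift l \<longleftrightarrow> (\<exists>a. l = Neg a \<and> q = Orig a)"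
  by (cases l) auto

lemma lit_atom_lift [simp]: "lit_atom (lift l) = Orig (lit_atom l)"
  by (cases l) auto

lemma fsat_freduct_elem_form:
  "fsat Y (freduct Z (elem_form c)) \<longleftrightarrow> relem_sat_red (lift -` Y) (lift -` Z) c"
  by (cases c) auto

lemma form_atoms_elem_form: "form_atoms (elem_form c) \<subseteq> range Orig"
  by (cases c) auto

lemma consistent_vimage_lift: "consistent Z \<Longrightarrow> consistent (lift -` Z)"
  unfolding consistent_def by auto

subsection \<open>Structure of the translation\<close>

text \<open>The two kinds of weight atoms are handled uniformly: \<open>Q\<close> is the constructor and \<open>R\<close>
  the comparison of the bound with the weight of the expression.\<close>

definition weight_atom_rel :: "(ereal \<Rightarrow> 'a wexpr \<Rightarrow> 'a natom) \<Rightarrow> (ereal \<Rightarrow> ereal \<Rightarrow> bool) \<Rightarrow> bool" where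
  "weight_atom_rel Q R \<longleftrightarrow> (Q = QLe \<and> R = (\<le>)) \<or> (Q = QLt \<and> R = (<))"

lemma weight_atom_rel_QLe [simp]: "weight_atom_rel QLe (\<le>)"
  and weight_atom_rel_QLt [simp]: "weight_atom_rel QLt (<)"
  by (simp_all add: weight_atom_rel_def)

lemma weight_atom_relE:
  assumes "weight_atom_rel Q R"
  obtains "Q = QLe" "R = (\<le>)" | "Q = QLt" "R = (<)"
  using assms unfolding weight_atom_rel_def by blast

lemma weight_atom_rel_mono: "weight_atom_rel Q R \<Longrightarrow> R w a \<Longrightarrow> a \<le> b \<Longrightarrow> R w b"
  by (erule weight_atom_relE) auto

lemma weight_atom_rel_shift:
  "weight_atom_rel Q R \<Longrightarrow> R (w - ereal c) (ereal a) \<longleftrightarrow> R w (ereal (a + c))"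
  by (erule weight_atom_relE; cases w) auto

definition weight_rules ::
    "(ereal \<Rightarrow> 'a wexpr \<Rightarrow> 'a natom) \<Rightarrow> (ereal \<Rightarrow> ereal \<Rightarrow> bool) \<Rightarrow> ereal \<Rightarrow> 'a wexpr \<Rightarrow> 'a natom nrule set" where
  "weight_rules Q R w S =
     (if R w 0 then {(qatom (Q w S), FTop)}
      else if R w (wtotal S) then
        {(qatom (Q w S), qatom (Q w (butlast S))),
         (qatom (Q w S), FAnd (elem_form (fst (last S))) (qatom (Q (w - ereal (snd (last S))) (butlast S))))}
      else {})"

lemma weight_rules_head: "(h, b) \<in> weight_rules Q R w S \<Longrightarrow> h = qatom (Q w S)"
  unfolding weight_rules_def by (auto split: if_splits)

lemma weight_rules_body_atoms:
  "(h, b) \<in> weight_rules Q R w S \<Longrightarrow> a \<in> form_atoms b \<Longrightarrow> a \<in> range Orig \<or> (\<exists>v. a = Q v (butlast S))"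
  unfolding weight_rules_def by (auto split: if_splits dest: subsetD[OF form_atoms_elem_form])

lemma weight_rules_Nil: "weight_rules Q R w [] = (if R w 0 then {(qatom (Q w []), FTop)} else {})"
  by (simp add: weight_rules_def wtotal_def zero_ereal_def)

lemma weight_rules_snoc:
  "weight_rules Q R w (S @ [(c, v)]) =
     (if R w 0 then {(qatom (Q w (S @ [(c, v)])), FTop)}
      else if R w (wtotal (S @ [(c, v)])) then
        {(qatom (Q w (S @ [(c, v)])), qatom (Q w S)),
         (qatom (Q w (S @ [(c, v)])), FAnd (elem_form c) (qatom (Q (w - ereal v) S)))}
      else {})"
  by (simp add: weight_rules_def)

lemma closed_iff:
  "closed \<Pi> \<longleftrightarrow>
     (\<forall>Q R w S. weight_atom_rel Q R \<longrightarrow> Q w S \<in> prog_atoms \<Pi> \<longrightarrow> weight_rules Q R w S \<subseteq> \<Pi>)"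
proof -
  have le: "weight_rules QLe (\<le>) w S \<subseteq> \<Pi> \<longleftrightarrow>
      (w \<le> 0 \<longrightarrow> (qatom (QLe w S), FTop) \<in> \<Pi>) \<and>
      (0 < w \<and> w \<le> wtotal S \<longrightarrow>
         (qatom (QLe w S), qatom (QLe w (butlast S))) \<in> \<Pi> \<and>
         (qatom (QLe w S), FAnd (elem_form (fst (last S)))
            (qatom (QLe (w - ereal (snd (last S))) (butlast S)))) \<in> \<Pi>)" for w S
    unfolding weight_rules_def by (auto simp: not_le)
  have lt: "weight_rules QLt (<) w S \<subseteq> \<Pi> \<longleftrightarrow>
      (w < 0 \<longrightarrow> (qatom (QLt w S), FTop) \<in> \<Pi>) \<and>
      (0 \<le> w \<and> w < wtotal S \<longrightarrow>
         (qatom (QLt w S), qatom (QLt w (butlast S))) \<in> \<Pi> \<and>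
         (qatom (QLt w S), FAnd (elem_form (fst (last S)))
            (qatom (QLt (w - ereal (snd (last S))) (butlast S)))) \<in> \<Pi>)" for w S
    unfolding weight_rules_def by (auto simp: not_less)
  have "(\<forall>Q R w S. weight_atom_rel Q R \<longrightarrow> Q w S \<in> prog_atoms \<Pi> \<longrightarrow> weight_rules Q R w S \<subseteq> \<Pi>) \<longleftrightarrow>
      (\<forall>w S. QLe w S \<in> prog_atoms \<Pi> \<longrightarrow> weight_rules QLe (\<le>) w S \<subseteq> \<Pi>) \<and>
      (\<forall>w S. QLt w S \<in> prog_atoms \<Pi> \<longrightarrow> weight_rules QLt (<) w S \<subseteq> \<Pi>)"
    unfolding weight_atom_rel_def by blast
  then show ?thesis unfolding closed_def le lt by (rule sym)
qed

lemma closedD: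
  "closed \<Pi> \<Longrightarrow> weight_atom_rel Q R \<Longrightarrow> Q w S \<in> prog_atoms \<Pi> \<Longrightarrow> weight_rules Q R w S \<subseteq> \<Pi>"
  unfolding closed_iff by blast

lemma closed_Inter:
  assumes "\<And>\<Pi>. \<Pi> \<in> F \<Longrightarrow> closed \<Pi>"
  shows "closed (\<Inter>F)"
  unfolding closed_iff
proof (intro allI impI)
  fix Q R w S assume QR: "weight_atom_rel Q R" and a: "Q w S \<in> prog_atoms (\<Inter>F)"
  show "weight_rules Q R w S \<subseteq> \<Inter>F"
  proof (rule Inter_greatest)
    fix \<Pi> assume "\<Pi> \<in> F"
    then have "closed \<Pi>" "Q w S \<in> prog_atoms \<Pi>"
      using assms a prog_atoms_mono[OF Inter_lower] by auto
    then show "weight_rules Q R w S \<subseteq> \<Pi>" using QR closedD by blast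
  qed
qed

lemma nn_closed: "closed (nn \<Omega>)"
  unfolding nn_def by (rule closed_Inter) simp

lemma rule_base_subset_nn: "r \<in> \<Omega> \<Longrightarrow> rule_base r \<subseteq> nn \<Omega>"
  unfolding nn_def by (intro Inter_greatest) auto

lemma nn_least: "closed \<Pi> \<Longrightarrow> (\<Union>r \<in> \<Omega>. rule_base r) \<subseteq> \<Pi> \<Longrightarrow> nn \<Omega> \<subseteq> \<Pi>"
  unfolding nn_def by (intro Inter_lower) simp

lemma weight_rules_subset_nn:
  "weight_atom_rel Q R \<Longrightarrow> Q w S \<in> prog_atoms (nn \<Omega>) \<Longrightarrow> weight_rules Q R w S \<subseteq> nn \<Omega>"
  by (rule closedD[OF nn_closed])

lemma nn_rule_cases:
  assumes "(h, b) \<in> nn \<Omega>"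
  obtains (base) r where "r \<in> \<Omega>" "(h, b) \<in> rule_base r"
  | (weight) Q R w S where "weight_atom_rel Q R" "Q w S \<in> prog_atoms (nn \<Omega>)" "(h, b) \<in> weight_rules Q R w S"
proof -
  define W where "W = {x. \<exists>Q R w S. weight_atom_rel Q R \<and> Q w S \<in> prog_atoms (nn \<Omega>) \<and> x \<in> weight_rules Q R w S}"
  let ?\<Pi> = "(\<Union>r \<in> \<Omega>. rule_base r) \<union> W"
  have "W \<subseteq> nn \<Omega>" unfolding W_def using weight_rules_subset_nn by blast
  then have "?\<Pi> \<subseteq> nn \<Omega>" using rule_base_subset_nn by blast
  have "closed ?\<Pi>"
    unfolding closed_iff
  proof (intro allI impI)
    fix Q R w S assume "weight_atom_rel Q R" "Q w S \<in> prog_atoms ?\<Pi>"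
    then have "weight_atom_rel Q R \<and> Q w S \<in> prog_atoms (nn \<Omega>)"
      using prog_atoms_mono[OF \<open>?\<Pi> \<subseteq> nn \<Omega>\<close>] by blast
    then show "weight_rules Q R w S \<subseteq> ?\<Pi>" unfolding W_def by blast
  qed
  then have "nn \<Omega> \<subseteq> ?\<Pi>" by (rule nn_least) simp
  then show ?thesis using assms that unfolding W_def by blast
qed

fun nonneg_atom :: "'a natom \<Rightarrow> bool" where
  "nonneg_atom (QLe w S) = nonneg_weights S"
| "nonneg_atom (QLt w S) = nonneg_weights S"
| "nonneg_atom _ = True"

lemma nonneg_atom_weight: "weight_atom_rel Q R \<Longrightarrow> nonneg_atom (Q w S) \<longleftrightarrow> nonneg_weights S"
  by (erule weight_atom_relE) auto

lemma rule_base_nonneg_atoms: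
  assumes "nonneg_prog \<Omega>" "r \<in> \<Omega>" "(h, b) \<in> rule_base r" "a \<in> form_atoms h \<union> form_atoms b"
  shows "nonneg_atom a"
proof -
  obtain L0 S0 U0 Cs where r: "r = ((L0, S0, U0), Cs)" by (metis prod_cases3 surj_pair)
  have "nonneg_weights S0" using nonneg_progD[OF assms(1) assms(2)[unfolded r], of L0 S0 U0] by simp
  moreover have "nonneg_weights S" if "(L, S, U) \<in> set Cs" for L S U
    using nonneg_progD[OF assms(1) assms(2)[unfolded r], of L S U] that by simp
  ultimately show ?thesis using assms(3,4) unfolding r by (auto simp: qatom_def)
qed

lemma nonneg_atom_nn:
  assumes "nonneg_prog \<Omega>" "a \<in> prog_atoms (nn \<Omega>)"
  shows "nonneg_atom a"
proof -
  define G where "G = {(h, b) \<in> nn \<Omega>. \<forall>a \<in> form_atoms h \<union> form_atoms b. nonneg_atom a}"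
  have "closed G"
    unfolding closed_iff
  proof (intro allI impI subsetI)
    fix Q R w S x assume QR: "weight_atom_rel Q R" and a: "Q w S \<in> prog_atoms G"
      and x: "x \<in> weight_rules Q R w S"
    obtain h b where x_eq: "x = (h, b)" by fastforce
    have "nonneg_weights S"
      using a nonneg_atom_weight[OF QR] unfolding prog_atoms_iff G_def by blast
    then have "nonneg_atom a" if "a \<in> form_atoms h \<union> form_atoms b" for a
      using that x weight_rules_head weight_rules_body_atoms[of h b Q R w S a]
        nonneg_atom_weight[OF QR] nonneg_weights_butlast unfolding x_eq by fastforce
    moreover have "x \<in> nn \<Omega>"
      using a x prog_atoms_mono[of G "nn \<Omega>"] weight_rules_subset_nn[OF QR] unfolding G_def by blast
    ultimately show "x \<in> G" unfolding G_def x_eq by blast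
  qed
  moreover have "(\<Union>r \<in> \<Omega>. rule_base r) \<subseteq> G"
    unfolding G_def using rule_base_subset_nn rule_base_nonneg_atoms[OF assms(1)] by fast
  ultimately have "nn \<Omega> \<subseteq> G" by (rule nn_least)
  then show ?thesis using assms(2) unfolding G_def prog_atoms_iff by blast
qed

lemma QNot_rule_nn:
  assumes "QNot l \<in> prog_atoms (nn \<Omega>)"
  shows "(qatom (QNot l), FNot (FLit (lift l))) \<in> nn \<Omega>"
proof -
  obtain h b where hb: "(h, b) \<in> nn \<Omega>" and l: "QNot l \<in> form_atoms h \<union> form_atoms b"
    using assms unfolding prog_atoms_iff by blast
  from hb show ?thesis
  proof (cases rule: nn_rule_cases)
    case (base r)
    obtain L0 S0 U0 Cs where r: "r = ((L0, S0, U0), Cs)" by (metis prod_cases3 surj_pair)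
    have "PosE l \<in> fst ` set S0" using base(2) l unfolding r by (force simp: qatom_def)
    then show ?thesis using rule_base_subset_nn[OF base(1)] unfolding r by auto
  next
    case (weight Q R w S)
    then show ?thesis using l weight_rules_head weight_rules_body_atoms
      by (fastforce elim: weight_atom_relE)
  qed
qed

subsection \<open>The interpretation of the new atoms induced by a set of literals\<close>

text \<open>\<open>extend \<Omega> X X\<close> is the answer set of \<open>[\<Omega>]\<^sup>n\<^sup>n\<close> corresponding to \<open>X\<close>; for \<open>M \<subseteq> X\<close>,
  \<open>extend \<Omega> M X\<close> evaluates the weight atoms in the reduct with respect to \<open>X\<close>.\<close>

fun new_atom_true :: "'a lit set \<Rightarrow> 'a lit set \<Rightarrow> 'a natom \<Rightarrow> bool" where
  "new_atom_true M X (Orig a) = False"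
| "new_atom_true M X (QNot l) = (l \<notin> X)"
| "new_atom_true M X (QLe w S) = (w \<le> ereal (wsum_red M X S))"
| "new_atom_true M X (QLt w S) = (w < ereal (wsum_red M X S))"

definition extend :: "'a wrule set \<Rightarrow> 'a lit set \<Rightarrow> 'a lit set \<Rightarrow> 'a natom lit set" where
  "extend \<Omega> M X = lift ` M \<union> Pos ` {q \<in> prog_atoms (nn \<Omega>). new_atom_true M X q}"

lemma new_atom_true_weight:
  "weight_atom_rel Q R \<Longrightarrow> new_atom_true M X (Q w S) \<longleftrightarrow> R w (ereal (wsum_red M X S))"
  by (erule weight_atom_relE) auto

lemma new_atom_true_is_new: "new_atom_true M X q \<Longrightarrow> is_new q"
  by (cases q) auto

lemma lift_in_extend [simp]: "lift l \<in> extend \<Omega> M X \<longleftrightarrow> l \<in> M"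
  unfolding extend_def by (auto simp: inj_image_mem_iff[OF inj_lift])

lemma Orig_in_extend [simp]: "Pos (Orig a) \<in> extend \<Omega> M X \<longleftrightarrow> Pos a \<in> M"
  using lift_in_extend[of "Pos a"] by simp

lemma Neg_in_extend [simp]: "Neg q \<in> extend \<Omega> M X \<longleftrightarrow> (\<exists>a. q = Orig a \<and> Neg a \<in> M)"
  unfolding extend_def by auto

lemma vimage_lift_extend [simp]: "lift -` extend \<Omega> M X = M"
  by auto

lemma QNot_in_extend [simp]:
  "Pos (QNot l) \<in> extend \<Omega> M X \<longleftrightarrow> QNot l \<in> prog_atoms (nn \<Omega>) \<and> l \<notin> X"
  unfolding extend_def by auto

lemma weight_atom_in_extend:
  assumes "weight_atom_rel Q R"
  shows "Pos (Q w S) \<in> extend \<Omega> M X \<longleftrightarrow> Q w S \<in> prog_atoms (nn \<Omega>) \<and> R w (ereal (wsum_red M X S))"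
  using assms new_atom_true_weight[OF assms] unfolding extend_def by (auto elim: weight_atom_relE)

lemmas QLe_in_extend [simp] = weight_atom_in_extend[OF weight_atom_rel_QLe]
  and QLt_in_extend [simp] = weight_atom_in_extend[OF weight_atom_rel_QLt]

lemma consistent_extend: "consistent M \<Longrightarrow> consistent (extend \<Omega> M X)"
  unfolding consistent_def by auto

lemma extend_mono:
  assumes "nonneg_prog \<Omega>" "M \<subseteq> M'"
  shows "extend \<Omega> M X \<subseteq> extend \<Omega> M' X"
proof -
  have "new_atom_true M' X q" if "q \<in> prog_atoms (nn \<Omega>)" "new_atom_true M X q" for q
  proof (cases q)
    case (QLe w S)
    have "nonneg_weights S" using nonneg_atom_nn[OF assms(1) that(1)] QLe by simp
    then show ?thesis using that(2) wsum_red_mono[OF _ assms(2)] QLe by (auto intro: order_trans)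
  next
    case (QLt w S)
    have "nonneg_weights S" using nonneg_atom_nn[OF assms(1) that(1)] QLt by simp
    then show ?thesis using that(2) wsum_red_mono[OF _ assms(2)] QLt by (auto intro: less_le_trans)
  qed (use that in auto)
  then show ?thesis using assms(2) unfolding extend_def by blast
qed

lemma extend_diff_new_atoms: "extend \<Omega> M X - Pos ` new_atoms \<Omega> = lift ` M"
proof -
  have "Pos ` {q \<in> prog_atoms (nn \<Omega>). new_atom_true M X q} \<subseteq> Pos ` new_atoms \<Omega>"
    unfolding new_atoms_def using new_atom_true_is_new by blast
  moreover have "lift ` M \<inter> Pos ` new_atoms \<Omega> = {}"
    unfolding new_atoms_def by auto
  ultimately show ?thesis unfolding extend_def by blast
qed

lemma weight_atom_fact_forced:
  assumes "psat Y (preduct Z (nn \<Omega>))" "weight_atom_rel Q R" "Q w S \<in> prog_atoms (nn \<Omega>)" "R w 0"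
  shows "Pos (Q w S) \<in> Y"
proof -
  have "(qatom (Q w S), FTop) \<in> nn \<Omega>"
    using weight_rules_subset_nn[OF assms(2,3)] assms(4) by (simp add: weight_rules_def)
  then show ?thesis using psat_preductD[OF assms(1)] by fastforce
qed

lemma weight_atom_forced:
  assumes "nonneg_prog \<Omega>" "psat Y (preduct Z (nn \<Omega>))" "weight_atom_rel Q R"
  shows "Q w S \<in> prog_atoms (nn \<Omega>) \<Longrightarrow> R w (ereal (wsum_red (lift -` Y) (lift -` Z) S)) \<Longrightarrow> Pos (Q w S) \<in> Y"
proof (induction S arbitrary: w rule: rev_induct)
  case Nil
  then show ?case using weight_atom_fact_forced[OF assms(2,3)] by (simp add: zero_ereal_def)
next
  case (snoc x S)
  obtain c v where x: "x = (c, v)" by fastforce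
  let ?M = "lift -` Y" and ?X = "lift -` Z"
  show ?case
  proof (cases "R w 0")
    case True
    then show ?thesis using weight_atom_fact_forced[OF assms(2,3) snoc.prems(1)] by blast
  next
    case False
    have "nonneg_weights (S @ [x])"
      using nonneg_atom_nn[OF assms(1) snoc.prems(1)] nonneg_atom_weight[OF assms(3)] by simp
    then have "R w (wtotal (S @ [x]))"
      using weight_atom_rel_mono[OF assms(3) snoc.prems(2) wsum_red_le_wtotal] by blast
    then have r1: "(qatom (Q w (S @ [x])), qatom (Q w S)) \<in> nn \<Omega>"
      and r2: "(qatom (Q w (S @ [x])), FAnd (elem_form c) (qatom (Q (w - ereal v) S))) \<in> nn \<Omega>"
      using weight_rules_subset_nn[OF assms(3) snoc.prems(1)] False by (simp_all add: weight_rules_snoc x)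
    show ?thesis
    proof (cases "relem_sat_red ?M ?X c")
      case True
      have "Q (w - ereal v) S \<in> prog_atoms (nn \<Omega>)" using form_atoms_subset_prog_atoms[OF r2] by auto
      moreover have "R (w - ereal v) (ereal (wsum_red ?M ?X S))"
        using snoc.prems(2) True weight_atom_rel_shift[OF assms(3)] by (simp add: x)
      ultimately have "Pos (Q (w - ereal v) S) \<in> Y" by (rule snoc.IH)
      then show ?thesis using psat_preductD[OF assms(2) r2] True by (simp add: fsat_freduct_elem_form)
    next
      case False
      have "Q w S \<in> prog_atoms (nn \<Omega>)" using form_atoms_subset_prog_atoms[OF r1] by auto
      moreover have "R w (ereal (wsum_red ?M ?X S))" using snoc.prems(2) False by (simp add: x)
      ultimately have "Pos (Q w S) \<in> Y" by (rule snoc.IH)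
      then show ?thesis using psat_preductD[OF assms(2) r1] by simp
    qed
  qed
qed

lemma extend_vimage_subset:
  assumes "nonneg_prog \<Omega>" "psat Y (preduct Z (nn \<Omega>))"
  shows "extend \<Omega> (lift -` Y) (lift -` Z) \<subseteq> Y"
proof -
  have "Pos q \<in> Y" if "q \<in> prog_atoms (nn \<Omega>)" "new_atom_true (lift -` Y) (lift -` Z) q" for q
  proof (cases q)
    case (QNot l)
    then show ?thesis using psat_preductD[OF assms(2) QNot_rule_nn] that by auto
  next
    case (QLe w S)
    then show ?thesis using weight_atom_forced[OF assms weight_atom_rel_QLe] that by simp
  next
    case (QLt w S)
    then show ?thesis using weight_atom_forced[OF assms weight_atom_rel_QLt] that by simp
  qed (use that in simp)
  then show ?thesis unfolding extend_def by blast
qed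

lemma weight_rule_sound:
  assumes "weight_atom_rel Q R" "(h, b) \<in> weight_rules Q R w S" "nonneg_weights S"
    and "fsat (extend \<Omega> M X) (freduct Z b)" "lift -` Z = X"
  shows "R w (ereal (wsum_red M X S))"
proof (cases "R w 0")
  case True
  then show ?thesis
    using weight_atom_rel_mono[OF assms(1)] wsum_red_nonneg[OF assms(3)] by (simp add: zero_ereal_def)
next
  case False
  then obtain T c v where S: "S = T @ [(c, v)]"
    using assms(2) by (cases S rule: rev_cases) (auto simp: weight_rules_Nil)
  have v: "0 \<le> v" "nonneg_weights T" using assms(3) S by simp_all
  from assms(2) False consider "b = qatom (Q w T)" | "b = FAnd (elem_form c) (qatom (Q (w - ereal v) T))"
    by (auto simp: weight_rules_snoc S split: if_splits)
  then show ?thesis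
  proof cases
    case 1
    then have "R w (ereal (wsum_red M X T))" using assms(4) weight_atom_in_extend[OF assms(1)] by simp
    then show ?thesis using weight_atom_rel_mono[OF assms(1)] v by (simp add: S)
  next
    case 2
    then have "relem_sat_red M X c" "R (w - ereal v) (ereal (wsum_red M X T))"
      using assms(4,5) weight_atom_in_extend[OF assms(1)] by (simp_all add: fsat_freduct_elem_form)
    then show ?thesis using weight_atom_rel_shift[OF assms(1)] by (simp add: S)
  qed
qed

lemma extend_sat_weight_rule:
  assumes "nonneg_prog \<Omega>" "weight_atom_rel Q R" "Q w S \<in> prog_atoms (nn \<Omega>)"
    and "(h, b) \<in> weight_rules Q R w S" "fsat (extend \<Omega> M X) (freduct Z b)" "lift -` Z = X"
  shows "fsat (extend \<Omega> M X) (freduct Z h)"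
proof -
  have "nonneg_weights S" using nonneg_atom_nn[OF assms(1,3)] nonneg_atom_weight[OF assms(2)] by simp
  then have "R w (ereal (wsum_red M X S))" using weight_rule_sound[OF assms(2,4) _ assms(5,6)] by blast
  then show ?thesis using assms(3) weight_rules_head[OF assms(4)] weight_atom_in_extend[OF assms(2)] by simp
qed

subsection \<open>Models of the reducts of the translation\<close>

lemma rule_baseE:
  assumes "(h, b) \<in> rule_base ((L0, S0, U0), Cs)"
  obtains (neg) l where "PosE l \<in> fst ` set S0" "h = qatom (QNot l)" "b = FNot (FLit (lift l))"
  | (head) l where "PosE l \<in> fst ` set S0" "h = FLit (lift l)"
      "b = conj_list (FNot (qatom (QNot l)) # map wc_nn Cs)"
  | (lower) "h = FBot" "b = conj_list (FNot (qatom (QLe L0 S0)) # map wc_nn Cs)"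
  | (upper) "h = FBot" "b = conj_list (qatom (QLt U0 S0) # map wc_nn Cs)"
  using assms by auto

lemma fsat_freduct_body:
  "fsat Y (freduct Z (conj_list (F # map wc_nn Cs))) \<longleftrightarrow>
     fsat Y (freduct Z F) \<and> (\<forall>(L, S, U) \<in> set Cs. Pos (QLe L S) \<in> Y \<and> Pos (QLt U S) \<notin> Z)"
  by (auto simp: case_prod_unfold)

lemma body_atoms_in_prog_atoms:
  assumes "(h, conj_list (F # map wc_nn Cs)) \<in> \<Pi>" "(L, S, U) \<in> set Cs"
  shows "QLe L S \<in> prog_atoms \<Pi>" "QLt U S \<in> prog_atoms \<Pi>"
  using form_atoms_subset_prog_atoms[OF assms(1)] assms(2) by force+

lemma constraints_extend_iff:
  assumes "((L0, S0, U0), Cs) \<in> \<Omega>"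
  shows "(\<forall>b. (FBot, b) \<in> rule_base ((L0, S0, U0), Cs) \<longrightarrow>
            \<not> fsat (extend \<Omega> X X) (freduct (extend \<Omega> X X) b))
     \<longleftrightarrow> ((\<forall>C \<in> set Cs. wc_sat X C) \<longrightarrow> wc_sat X (L0, S0, U0))"
proof -
  let ?Z = "extend \<Omega> X X" and ?PA = "prog_atoms (nn \<Omega>)"
  let ?b1 = "conj_list (FNot (qatom (QLe L0 S0)) # map wc_nn Cs)"
  let ?b2 = "conj_list (qatom (QLt U0 S0) # map wc_nn Cs)"
  have rules: "(FBot, ?b1) \<in> nn \<Omega>" "(FBot, ?b2) \<in> nn \<Omega>"
    using rule_base_subset_nn[OF assms] by auto
  have constraints: "(FBot, b) \<in> rule_base ((L0, S0, U0), Cs) \<longleftrightarrow> b = ?b1 \<or> b = ?b2" for b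
    by (auto simp: qatom_def)
  have lhs: "(\<forall>b. (FBot, b) \<in> rule_base ((L0, S0, U0), Cs) \<longrightarrow> \<not> fsat ?Z (freduct ?Z b)) \<longleftrightarrow>
      \<not> fsat ?Z (freduct ?Z ?b1) \<and> \<not> fsat ?Z (freduct ?Z ?b2)"
    by (simp only: constraints) blast
  have atoms: "QLe L0 S0 \<in> ?PA" "QLt U0 S0 \<in> ?PA"
    using form_atoms_subset_prog_atoms[OF rules(1)] form_atoms_subset_prog_atoms[OF rules(2)] by auto
  have body: "(\<forall>(L, S, U) \<in> set Cs. Pos (QLe L S) \<in> ?Z \<and> Pos (QLt U S) \<notin> ?Z) \<longleftrightarrow> (\<forall>C \<in> set Cs. wc_sat X C)"
    using body_atoms_in_prog_atoms[OF rules(1)] by (auto simp: not_less)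
  have "fsat ?Z (freduct ?Z ?b1) \<longleftrightarrow> \<not> L0 \<le> ereal (wsum X S0) \<and> (\<forall>C \<in> set Cs. wc_sat X C)"
    unfolding fsat_freduct_body body using atoms by simp
  moreover have "fsat ?Z (freduct ?Z ?b2) \<longleftrightarrow> U0 < ereal (wsum X S0) \<and> (\<forall>C \<in> set Cs. wc_sat X C)"
    unfolding fsat_freduct_body body using atoms by simp
  ultimately show ?thesis unfolding lhs by (auto simp: not_less)
qed

lemma wprog_sat_iff_constraints:
  "wprog_sat X \<Omega> \<longleftrightarrow> (\<forall>r \<in> \<Omega>. \<forall>b. (FBot, b) \<in> rule_base r \<longrightarrow>
     \<not> fsat (extend \<Omega> X X) (freduct (extend \<Omega> X X) b))"
proof -
  have "(case r of (C0, Cs) \<Rightarrow> (\<forall>C \<in> set Cs. wc_sat X C) \<longrightarrow> wc_sat X C0) \<longleftrightarrow>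
      (\<forall>b. (FBot, b) \<in> rule_base r \<longrightarrow> \<not> fsat (extend \<Omega> X X) (freduct (extend \<Omega> X X) b))"
    if "r \<in> \<Omega>" for r
  proof -
    obtain L0 S0 U0 Cs where r: "r = ((L0, S0, U0), Cs)" by (metis prod_cases3 surj_pair)
    show ?thesis using constraints_extend_iff[OF that[unfolded r]] unfolding r by simp
  qed
  then show ?thesis unfolding wprog_sat_def by (rule ball_cong[OF refl])
qed

lemma psat_extend:
  assumes "nonneg_prog \<Omega>" "wprog_sat X \<Omega>" "M \<subseteq> X" "dsat M (wreduct X \<Omega>)"
  shows "psat (extend \<Omega> M X) (preduct (extend \<Omega> X X) (nn \<Omega>))"
  unfolding psat_preduct_iff
proof (clarify)
  let ?Z = "extend \<Omega> X X"
  fix h b assume hb: "(h, b) \<in> nn \<Omega>" and body: "fsat (extend \<Omega> M X) (freduct ?Z b)"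
  from hb show "fsat (extend \<Omega> M X) (freduct ?Z h)"
  proof (cases rule: nn_rule_cases)
    case (weight Q R w S)
    then show ?thesis using extend_sat_weight_rule[OF assms(1) _ _ _ body] by simp
  next
    case (base r)
    obtain L0 S0 U0 Cs where r: "r = ((L0, S0, U0), Cs)" by (metis prod_cases3 surj_pair)
    have body_Z: "fsat ?Z (freduct ?Z b)"
      using fsat_freduct_mono[OF body extend_mono[OF assms(1,3)]] .
    from base(2)[unfolded r] show ?thesis
    proof (cases rule: rule_baseE)
      case (neg l)
      then show ?thesis using body form_atoms_subset_prog_atoms[OF hb] by auto
    next
      case (head l)
      note atoms = body_atoms_in_prog_atoms[OF hb[unfolded head(3)]]
      have "QNot l \<in> prog_atoms (nn \<Omega>)" using form_atoms_subset_prog_atoms[OF hb] head by auto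
      then have "l \<in> X" using body head by (simp split: if_splits)
      moreover have "\<forall>(L, S, U) \<in> set Cs. ereal (wsum X S) \<le> U"
        using body atoms(2) unfolding head fsat_freduct_body by (fastforce simp: not_less)
      moreover have "\<forall>(L, S, U) \<in> set Cs. L \<le> ereal (wsum_red M X S)"
        using body unfolding head fsat_freduct_body by fastforce
      ultimately have "l \<in> M" using dsat_wreductD[OF assms(4) base(1)[unfolded r]] head(1) by simp
      then show ?thesis using head by simp
    next
      case lower
      then show ?thesis using body_Z assms(2) base unfolding wprog_sat_iff_constraints r by blast
    next
      case upper
      then show ?thesis using body_Z assms(2) base unfolding wprog_sat_iff_constraints r by blast
    qed
  qed
qed

lemma psat_inter_extend:
  assumes "nonneg_prog \<Omega>" "psat Z (preduct Z (nn \<Omega>))"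
  shows "psat (Z \<inter> extend \<Omega> (lift -` Z) (lift -` Z)) (preduct Z (nn \<Omega>))"
  unfolding psat_preduct_iff
proof (clarify)
  let ?E = "extend \<Omega> (lift -` Z) (lift -` Z)"
  fix h b assume hb: "(h, b) \<in> nn \<Omega>" and body: "fsat (Z \<inter> ?E) (freduct Z b)"
  have head_Z: "fsat Z (freduct Z h)"
    using psat_preductD[OF assms(2) hb fsat_freduct_mono[OF body]] by blast
  from hb show "fsat (Z \<inter> ?E) (freduct Z h)"
  proof (cases rule: nn_rule_cases)
    case (weight Q R w S)
    have "fsat ?E (freduct Z b)" using fsat_freduct_mono[OF body] by blast
    then have "fsat ?E (freduct Z h)" using extend_sat_weight_rule[OF assms(1) weight] by blast
    then show ?thesis using head_Z weight_rules_head[OF weight(3)] by simp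
  next
    case (base r)
    obtain L0 S0 U0 Cs where r: "r = ((L0, S0, U0), Cs)" by (metis prod_cases3 surj_pair)
    from base(2)[unfolded r] show ?thesis
    proof (cases rule: rule_baseE)
      case (neg l)
      then show ?thesis using body head_Z form_atoms_subset_prog_atoms[OF hb] by (auto split: if_splits)
    qed (use head_Z in auto)
  qed
qed

lemma dsat_vimage_lift:
  assumes "nonneg_prog \<Omega>" "psat Y (preduct (extend \<Omega> X X) (nn \<Omega>))"
  shows "dsat (lift -` Y) (wreduct X \<Omega>)"
proof (rule dsat_wreductI)
  let ?Z = "extend \<Omega> X X"
  fix C0 Cs l
  assume r: "(C0, Cs) \<in> \<Omega>" and l: "PosE l \<in> fst ` set (fst (snd C0))" "l \<in> X"
    and up: "\<forall>(L, S, U) \<in> set Cs. ereal (wsum X S) \<le> U"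
    and low: "\<forall>(L, S, U) \<in> set Cs. L \<le> ereal (wsum_red (lift -` Y) X S)"
  obtain L0 S0 U0 where C0: "C0 = (L0, S0, U0)" by (cases C0)
  let ?b = "conj_list (FNot (qatom (QNot l)) # map wc_nn Cs)"
  have rule: "(FLit (lift l), ?b) \<in> nn \<Omega>"
    using rule_base_subset_nn[OF r] l(1) unfolding C0 by auto
  have "extend \<Omega> (lift -` Y) X \<subseteq> Y"
    using extend_vimage_subset[OF assms] by simp
  then have "\<forall>(L, S, U) \<in> set Cs. Pos (QLe L S) \<in> Y"
    using low body_atoms_in_prog_atoms(1)[OF rule] by fastforce
  moreover have "\<forall>(L, S, U) \<in> set Cs. Pos (QLt U S) \<notin> ?Z"
    using up by (auto simp: not_less)
  ultimately have "fsat Y (freduct ?Z ?b)"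
    using l(2) unfolding fsat_freduct_body by fastforce
  then show "l \<in> lift -` Y" using psat_preductD[OF assms(2) rule] by simp
qed

lemma nested_answer_set_nn_extend:
  assumes "nonneg_prog \<Omega>" "nested_answer_set (nn \<Omega>) Z"
  shows "extend \<Omega> (lift -` Z) (lift -` Z) = Z" "wc_answer_set \<Omega> (lift -` Z)"
proof -
  define X where "X = lift -` Z"
  have cZ: "consistent Z" and ZZ: "psat Z (preduct Z (nn \<Omega>))"
    and min: "\<And>Y. consistent Y \<Longrightarrow> Y \<subseteq> Z \<Longrightarrow> psat Y (preduct Z (nn \<Omega>)) \<Longrightarrow> Y = Z"
    using assms(2) unfolding nested_answer_set_def min_answer_set_def by blast+
  have "Z \<inter> extend \<Omega> X X = Z"
    using min[OF consistent_subset[OF cZ] _ psat_inter_extend[OF assms(1) ZZ]] unfolding X_def by blast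
  moreover have "extend \<Omega> X X \<subseteq> Z"
    using extend_vimage_subset[OF assms(1) ZZ] unfolding X_def .
  ultimately have Z: "extend \<Omega> X X = Z" by blast
  then show "extend \<Omega> (lift -` Z) (lift -` Z) = Z" unfolding X_def .
  have ws: "wprog_sat X \<Omega>"
    unfolding wprog_sat_iff_constraints Z
  proof (intro ballI allI impI notI)
    fix r b assume "r \<in> \<Omega>" "(FBot, b) \<in> rule_base r" "fsat Z (freduct Z b)"
    then have "fsat Z (freduct Z FBot)" using psat_preductD[OF ZZ] rule_base_subset_nn by blast
    then show False by simp
  qed
  let ?M = "cl (wreduct X \<Omega>)"
  have M: "?M \<subseteq> X" using cl_least[OF dsat_wreduct_self] .
  have "extend \<Omega> ?M X \<subseteq> Z" using extend_mono[OF assms(1) M, of X] unfolding Z .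
  moreover have "psat (extend \<Omega> ?M X) (preduct Z (nn \<Omega>))"
    using psat_extend[OF assms(1) ws M dsat_cl_wreduct[OF assms(1)]] unfolding Z .
  ultimately have "extend \<Omega> ?M X = Z" using min consistent_subset[OF cZ] by blast
  then have "lift -` extend \<Omega> ?M X = lift -` Z" by (rule arg_cong)
  then have "?M = X" unfolding X_def vimage_lift_extend .
  then show "wc_answer_set \<Omega> (lift -` Z)"
    using ws consistent_vimage_lift[OF cZ] unfolding wc_answer_set_def X_def by blast
qed

lemma wc_answer_set_nested_answer_set_extend:
  assumes "nonneg_prog \<Omega>" "wc_answer_set \<Omega> X"
  shows "nested_answer_set (nn \<Omega>) (extend \<Omega> X X)"
proof -
  let ?Z = "extend \<Omega> X X"
  have cX: "consistent X" and ws: "wprog_sat X \<Omega>" and clX: "cl (wreduct X \<Omega>) = X"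
    using assms(2) unfolding wc_answer_set_def by blast+
  have "Y = ?Z" if "Y \<subseteq> ?Z" "psat Y (preduct ?Z (nn \<Omega>))" for Y
  proof -
    have "X \<subseteq> lift -` Y" using cl_least[OF dsat_vimage_lift[OF assms(1) that(2)]] clX by simp
    moreover have "lift -` Y \<subseteq> X" using that(1) by auto
    ultimately have "extend \<Omega> (lift -` Y) (lift -` ?Z) = ?Z" by simp
    then show "Y = ?Z" using extend_vimage_subset[OF assms(1) that(2)] that(1) by simp
  qed
  moreover have "psat ?Z (preduct ?Z (nn \<Omega>))"
    using psat_extend[OF assms(1) ws order_refl dsat_wreduct_self] .
  ultimately show ?thesis
    unfolding nested_answer_set_def min_answer_set_def using consistent_extend[OF cX] by blast
qed

lemma nested_answer_sets_nn:
  assumes "nonneg_prog \<Omega>"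
  shows "{Z. nested_answer_set (nn \<Omega>) Z} = (\<lambda>X. extend \<Omega> X X) ` {X. wc_answer_set \<Omega> X}"
proof (intro subset_antisym subsetI)
  fix Z assume "Z \<in> {Z. nested_answer_set (nn \<Omega>) Z}"
  then have "extend \<Omega> (lift -` Z) (lift -` Z) = Z" "wc_answer_set \<Omega> (lift -` Z)"
    using nested_answer_set_nn_extend[OF assms] by simp_all
  then show "Z \<in> (\<lambda>X. extend \<Omega> X X) ` {X. wc_answer_set \<Omega> X}"
    by (intro image_eqI[where x = "lift -` Z"]) simp_all
next
  fix Z assume "Z \<in> (\<lambda>X. extend \<Omega> X X) ` {X. wc_answer_set \<Omega> X}"
  then show "Z \<in> {Z. nested_answer_set (nn \<Omega>) Z}"
    using wc_answer_set_nested_answer_set_extend[OF assms] by blast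
qed

theorem theorem2:
  fixes \<Omega> :: "'a wrule set"
  assumes "\<forall>(C0, Cs) \<in> \<Omega>. \<forall>(L, S, U) \<in> set (C0 # Cs). \<forall>(c, w) \<in> set S. 0 \<le> w"
  shows "bij_betw (\<lambda>Z. Z - Pos ` new_atoms \<Omega>)
           {Z. nested_answer_set (nn \<Omega>) Z}
           ((\<lambda>X. lift ` X) ` {X. wc_answer_set \<Omega> X})"
proof -
  have "nonneg_prog \<Omega>" using assms unfolding nonneg_prog_def nonneg_weights_def .
  let ?E = "\<lambda>X. extend \<Omega> X X" and ?f = "\<lambda>Z. Z - Pos ` new_atoms \<Omega>"
  have f_E: "?f \<circ> ?E = (\<lambda>X. lift ` X)" by (simp add: comp_def extend_diff_new_atoms)
  let ?A = "{X. wc_answer_set \<Omega> X}"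
  have "inj_on ?f (?E ` ?A)"
    by (rule inj_on_imageI) (simp add: f_E inj_on_def inj_image_eq_iff[OF inj_lift])
  then have "bij_betw ?f (?E ` ?A) (?f ` ?E ` ?A)" by (rule inj_on_imp_bij_betw)
  moreover have "?f ` ?E ` ?A = (\<lambda>X. lift ` X) ` ?A" by (simp add: image_comp f_E)
  ultimately show ?thesis unfolding nested_answer_sets_nn[OF \<open>nonneg_prog \<Omega>\<close>] by simp
qed

end
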